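(* Let $d\in\mathbb{N}$. Then for any integer $k\ge19^{2d-1}+1$ and any support preserving map $F\colon S_{\ell_\infty^k}\to S_{\ell_1^k}$ (not assumed continuous), we have $\omega_F(\tfrac1d)\ge\tfrac12$. In particular, there is no sequence $(F_k\colon S_{\ell_\infty^k}\to S_{\ell_1^k})_{k=1}^\infty$ of equi-uniformly continuous support preserving maps.
   Context: $S_{\ell_p^k}$ is the unit sphere of $(\mathbb{R}^k,\|\cdot\|_p)$. $\mathrm{supp}(x)=\{i:x_i\neq0\}$; $F$ is support preserving if $\mathrm{supp}(F(x))=\mathrm{supp}(x)$ for all $x$. $\omega_F(t)=\sup\{\|F(x)-F(y)\|_1:\|x-y\|_\infty\le t\}$. A sequence $(F_k)$ is equi-uniformly continuous if for every $\varepsilon>0$ there is $\delta>0$ with $\omega_{F_k}(\delta)<\varepsilon$ for all $k$. *)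

theory Defs
  imports "HOL-Analysis.Analysis"
begin

text \<open>Vectors of R^k are represented as functions nat => real vanishing outside {0..<k}.\<close>

definition in_Rk :: "nat \<Rightarrow> (nat \<Rightarrow> real) \<Rightarrow> bool" where
  "in_Rk k x \<longleftrightarrow> (\<forall>i\<ge>k. x i = 0)"

definition linf_norm :: "nat \<Rightarrow> (nat \<Rightarrow> real) \<Rightarrow> real" where
  "linf_norm k x = Max (insert 0 ((\<lambda>i. \<bar>x i\<bar>) ` {..<k}))"

definition l1_norm :: "nat \<Rightarrow> (nat \<Rightarrow> real) \<Rightarrow> real" where
  "l1_norm k x = (\<Sum>i<k. \<bar>x i\<bar>)"

definition sphere_linf :: "nat \<Rightarrow> (nat \<Rightarrow> real) set" where
  "sphere_linf k = {x. in_Rk k x \<and> linf_norm k x = 1}"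

definition sphere_l1 :: "nat \<Rightarrow> (nat \<Rightarrow> real) set" where
  "sphere_l1 k = {x. in_Rk k x \<and> l1_norm k x = 1}"

definition supp :: "(nat \<Rightarrow> real) \<Rightarrow> nat set" where
  "supp x = {i. x i \<noteq> 0}"

definition support_preserving_map :: "nat \<Rightarrow> ((nat \<Rightarrow> real) \<Rightarrow> (nat \<Rightarrow> real)) \<Rightarrow> bool" where
  "support_preserving_map k F \<longleftrightarrow>
     (\<forall>x\<in>sphere_linf k. F x \<in> sphere_l1 k \<and> supp (F x) = supp x)"

definition modulus :: "nat \<Rightarrow> ((nat \<Rightarrow> real) \<Rightarrow> (nat \<Rightarrow> real)) \<Rightarrow> real \<Rightarrow> real" where
  "modulus k F t = Sup {l1_norm k (F x - F y) | x y.
      x \<in> sphere_linf k \<and> y \<in> sphere_linf k \<and> linf_norm k (x - y) \<le> t}"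

end

theory Submission
  imports Defs
begin

text \<open>
  Averaging \<open>\<bar>F\<bar>\<close> over all permutations of the coordinates turns \<open>F\<close> into a
  permutation equivariant field of probability vectors which vanishes off \<open>supp x\<close> and whose
  modulus of continuity is at most that of \<open>F\<close>.  Test it on the staircase vector having
  \<open>4^j\<close> coordinates of height \<open>max (d - j) 1 / d\<close> in layer \<open>j = 0, \<dots>, d\<close>.  By
  equivariance the weights are constant, say \<open>p j\<close>, on layer \<open>j\<close>, so
  \<open>\<Sum>j\<le>d. 4^j p j = 1\<close>.  Moving \<open>4^j\<close> coordinates of layer \<open>j + 1\<close> to layer \<open>j\<close>,
  simultaneously for all \<open>j\<close> of one parity, or deleting the last layer, moves the vector by
  at most \<open>1/d\<close>.  So the weights move by at most \<open>\<omega> = modulus k F (1/d)\<close> in the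
  \<open>l\<^sub>1\<close> norm, and at most \<open>\<omega>/2\<close> of mass can change layer.  This gives
  \<open>\<Sum>j<d. 4^j (p j - p (j + 1)) \<le> \<omega>\<close> and \<open>4^d p d \<le> \<omega>/2\<close>, which together with
  the total mass force \<open>\<omega> \<ge> 1/2\<close>.  Only dimension \<open>(d + 1) 4^d \<le> 19^(2d-1) + 1\<close>
  is needed.
\<close>

lemma linf_norm_le:
  assumes "0 \<le> c" "\<And>i. i < k \<Longrightarrow> \<bar>x i\<bar> \<le> c"
  shows "linf_norm k x \<le> c"
  unfolding linf_norm_def using assms by (auto intro!: Max.boundedI)

lemma abs_le_linf_norm: "i < k \<Longrightarrow> \<bar>x i\<bar> \<le> linf_norm k x"
  unfolding linf_norm_def by (intro Max_ge) auto

lemma in_sphere_linfI: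
  assumes "in_Rk k x" "\<And>i. i < k \<Longrightarrow> \<bar>x i\<bar> \<le> 1" "i\<^sub>0 < k" "\<bar>x i\<^sub>0\<bar> = 1"
  shows "x \<in> sphere_linf k"
  using assms linf_norm_le[of 1 k x] abs_le_linf_norm[of i\<^sub>0 k x]
  by (force simp: sphere_linf_def)

lemma linf_norm_permute:
  assumes "\<sigma> permutes {..<k}"
  shows "linf_norm k (x \<circ> \<sigma>) = linf_norm k x"
proof -
  have "(\<lambda>i. \<bar>(x \<circ> \<sigma>) i\<bar>) ` {..<k} = (\<lambda>i. \<bar>x i\<bar>) ` (\<sigma> ` {..<k})"
    by (simp add: image_image)
  then show ?thesis by (simp add: linf_norm_def permutes_image[OF assms])
qed

lemma sphere_linf_permute:
  assumes "\<sigma> permutes {..<k}" "x \<in> sphere_linf k"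
  shows "x \<circ> \<sigma> \<in> sphere_linf k"
  using assms linf_norm_permute[OF assms(1), of x]
  by (auto simp: sphere_linf_def in_Rk_def permutes_not_in)

lemma involution_permutes:
  assumes "\<And>x. f (f x) = x" "\<And>x. x \<notin> S \<Longrightarrow> f x = x"
  shows "f permutes S"
  using involuntory_imp_bij[of f] assms by (auto simp: permutes_def bij_iff)

lemma sum_diff_le_half_sum_abs_diff:
  fixes a b :: "'a \<Rightarrow> real"
  assumes "finite A" "sum a A = sum b A" "S \<subseteq> A"
  shows "(\<Sum>i\<in>S. b i - a i) \<le> (\<Sum>i\<in>A. \<bar>a i - b i\<bar>) / 2"
proof -
  have split: "(\<Sum>i\<in>A. g i) = (\<Sum>i\<in>A - S. g i) + (\<Sum>i\<in>S. g i)" for g :: "'a \<Rightarrow> real"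
    using assms by (simp add: sum.subset_diff[of S A])
  have "(\<Sum>i\<in>A. b i - a i) = 0"
    using assms(2) by (simp add: sum_subtractf)
  moreover have "(\<Sum>i\<in>S. b i - a i) \<le> (\<Sum>i\<in>S. \<bar>a i - b i\<bar>)"
    by (intro sum_mono) auto
  moreover have "(\<Sum>i\<in>A - S. a i - b i) \<le> (\<Sum>i\<in>A - S. \<bar>a i - b i\<bar>)"
    by (intro sum_mono) auto
  ultimately show ?thesis
    using split[of "\<lambda>i. b i - a i"] split[of "\<lambda>i. \<bar>a i - b i\<bar>"] split[of "\<lambda>i. a i - b i"]
    by (simp add: sum_subtractf)
qed

lemma support_preserving_sum_abs:
  "support_preserving_map k F \<Longrightarrow> x \<in> sphere_linf k \<Longrightarrow> (\<Sum>i<k. \<bar>F x i\<bar>) = 1"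
  by (auto simp: support_preserving_map_def sphere_l1_def l1_norm_def)

lemma support_preserving_vanish:
  "support_preserving_map k F \<Longrightarrow> x \<in> sphere_linf k \<Longrightarrow> x i = 0 \<Longrightarrow> F x i = 0"
  unfolding support_preserving_map_def supp_def by (auto simp: set_eq_iff)

lemma l1_norm_le_modulus:
  assumes F: "support_preserving_map k F" and "x \<in> sphere_linf k" "y \<in> sphere_linf k"
    and "linf_norm k (x - y) \<le> t"
  shows "l1_norm k (F x - F y) \<le> modulus k F t"
  unfolding modulus_def
proof (rule cSup_upper)
  show "l1_norm k (F x - F y) \<in> {l1_norm k (F x - F y) |x y.
          x \<in> sphere_linf k \<and> y \<in> sphere_linf k \<and> linf_norm k (x - y) \<le> t}"
    using assms by blast
  have "l1_norm k (F a - F b) \<le> 2" if "a \<in> sphere_linf k" "b \<in> sphere_linf k" for a b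
  proof -
    have "l1_norm k (F a - F b) \<le> (\<Sum>i<k. \<bar>F a i\<bar> + \<bar>F b i\<bar>)"
      unfolding l1_norm_def by (intro sum_mono) (simp add: abs_triangle_ineq4)
    also have "\<dots> = 2"
      using that support_preserving_sum_abs[OF F] by (simp add: sum.distrib)
    finally show ?thesis .
  qed
  then show "bdd_above {l1_norm k (F x - F y) |x y.
          x \<in> sphere_linf k \<and> y \<in> sphere_linf k \<and> linf_norm k (x - y) \<le> t}"
    by (auto intro: bdd_aboveI[of _ 2])
qed

section \<open>Symmetrization\<close>

definition sym_average ::
    "nat \<Rightarrow> ((nat \<Rightarrow> real) \<Rightarrow> nat \<Rightarrow> real) \<Rightarrow> (nat \<Rightarrow> real) \<Rightarrow> nat \<Rightarrow> real"
  where "sym_average k F x i = (\<Sum>\<sigma> | \<sigma> permutes {..<k}. \<bar>F (x \<circ> \<sigma>) (inv \<sigma> i)\<bar>) / fact k"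

lemma card_permutations_lessThan: "card {\<sigma>. \<sigma> permutes {..<k}} = fact k"
  by (rule card_permutations) simp_all

lemma sum_permute_inv_index:
  assumes "\<sigma> permutes {..<k}"
  shows "(\<Sum>i<k. g (inv \<sigma> i)) = (\<Sum>i<k. g i)"
  using assms by (intro sum.reindex_bij_betw permutes_imp_bij permutes_inv)

lemma sym_average_nonneg: "0 \<le> sym_average k F x i"
  by (simp add: sym_average_def sum_nonneg)

lemma sum_sym_average:
  assumes F: "support_preserving_map k F" and x: "x \<in> sphere_linf k"
  shows "(\<Sum>i<k. sym_average k F x i) = 1"
proof -
  have "(\<Sum>i<k. sym_average k F x i)
      = (\<Sum>\<sigma> | \<sigma> permutes {..<k}. \<Sum>i<k. \<bar>F (x \<circ> \<sigma>) (inv \<sigma> i)\<bar>) / fact k"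
    unfolding sym_average_def by (simp add: sum_divide_distrib[symmetric] sum.swap[of _ "{..<k}"])
  also have "\<dots> = (\<Sum>\<sigma> | \<sigma> permutes {..<k}. 1) / fact k"
  proof (intro arg_cong[where f = "\<lambda>s. s / fact k"] sum.cong refl)
    fix \<sigma> assume "\<sigma> \<in> {\<sigma>. \<sigma> permutes {..<k}}"
    then have \<sigma>: "\<sigma> permutes {..<k}" by simp
    show "(\<Sum>i<k. \<bar>F (x \<circ> \<sigma>) (inv \<sigma> i)\<bar>) = 1"
      using sum_permute_inv_index[OF \<sigma>, of "\<lambda>i. \<bar>F (x \<circ> \<sigma>) i\<bar>"]
        support_preserving_sum_abs[OF F sphere_linf_permute[OF \<sigma> x]] by simp
  qed
  finally show ?thesis by (simp add: card_permutations_lessThan)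
qed

lemma sym_average_vanish:
  assumes F: "support_preserving_map k F" and x: "x \<in> sphere_linf k" and "x i = 0"
  shows "sym_average k F x i = 0"
proof -
  have "F (x \<circ> \<sigma>) (inv \<sigma> i) = 0" if \<sigma>: "\<sigma> permutes {..<k}" for \<sigma>
    using support_preserving_vanish[OF F sphere_linf_permute[OF \<sigma> x]] assms(3)
    by (simp add: permutes_inverses[OF \<sigma>])
  then show ?thesis by (simp add: sym_average_def)
qed

lemma sym_average_permute:
  assumes \<pi>: "\<pi> permutes {..<k}"
  shows "sym_average k F (x \<circ> \<pi>) i = sym_average k F x (\<pi> i)"
proof -
  have "inv (\<pi> \<circ> \<sigma>) (\<pi> i) = inv \<sigma> i" if \<sigma>: "\<sigma> permutes {..<k}" for \<sigma>
    using o_inv_distrib[OF permutes_bij[OF \<pi>] permutes_bij[OF \<sigma>]]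
    by (simp add: permutes_inverses[OF \<pi>])
  then have "(\<Sum>\<sigma> | \<sigma> permutes {..<k}. \<bar>F (x \<circ> (\<pi> \<circ> \<sigma>)) (inv (\<pi> \<circ> \<sigma>) (\<pi> i))\<bar>)
      = (\<Sum>\<sigma> | \<sigma> permutes {..<k}. \<bar>F ((x \<circ> \<pi>) \<circ> \<sigma>) (inv \<sigma> i)\<bar>)"
    by (intro sum.cong) (auto simp: o_assoc)
  then show ?thesis
    unfolding sym_average_def by (subst setum_permutations_compose_left[OF \<pi>]) simp
qed

lemma sum_abs_sym_average_diff_le:
  assumes F_close: "\<And>x y. x \<in> sphere_linf k \<Longrightarrow> y \<in> sphere_linf k \<Longrightarrow> linf_norm k (x - y) \<le> t
      \<Longrightarrow> l1_norm k (F x - F y) \<le> M"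
    and x: "x \<in> sphere_linf k" and y: "y \<in> sphere_linf k" and xy: "linf_norm k (x - y) \<le> t"
  shows "(\<Sum>i<k. \<bar>sym_average k F x i - sym_average k F y i\<bar>) \<le> M"
proof -
  let ?d = "\<lambda>\<sigma> i. \<bar>F (x \<circ> \<sigma>) (inv \<sigma> i) - F (y \<circ> \<sigma>) (inv \<sigma> i)\<bar>"
  have permuted_close: "(\<Sum>i<k. ?d \<sigma> i) \<le> M" if \<sigma>: "\<sigma> permutes {..<k}" for \<sigma>
  proof -
    have "(x \<circ> \<sigma>) - (y \<circ> \<sigma>) = (x - y) \<circ> \<sigma>" by (simp add: fun_eq_iff)
    then have "linf_norm k ((x \<circ> \<sigma>) - (y \<circ> \<sigma>)) \<le> t"
      using xy linf_norm_permute[OF \<sigma>] by simp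
    then have "l1_norm k (F (x \<circ> \<sigma>) - F (y \<circ> \<sigma>)) \<le> M"
      using F_close sphere_linf_permute[OF \<sigma>] x y by blast
    then show ?thesis
      using sum_permute_inv_index[OF \<sigma>, of "\<lambda>i. \<bar>F (x \<circ> \<sigma>) i - F (y \<circ> \<sigma>) i\<bar>"]
      by (simp add: l1_norm_def)
  qed
  have "(\<Sum>i<k. \<bar>sym_average k F x i - sym_average k F y i\<bar>)
      = (\<Sum>i<k. \<bar>\<Sum>\<sigma> | \<sigma> permutes {..<k}. \<bar>F (x \<circ> \<sigma>) (inv \<sigma> i)\<bar> - \<bar>F (y \<circ> \<sigma>) (inv \<sigma> i)\<bar>\<bar>) / fact k"
    unfolding sym_average_def
    by (simp add: sum_divide_distrib[symmetric] diff_divide_distrib[symmetric] sum_subtractf)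
  also have "\<dots> \<le> (\<Sum>i<k. \<Sum>\<sigma> | \<sigma> permutes {..<k}. ?d \<sigma> i) / fact k"
    by (intro divide_right_mono sum_mono order.trans[OF sum_abs] abs_triangle_ineq3) auto
  also have "\<dots> = (\<Sum>\<sigma> | \<sigma> permutes {..<k}. \<Sum>i<k. ?d \<sigma> i) / fact k"
    by (simp add: sum.swap[of _ "{..<k}"])
  also have "\<dots> \<le> (\<Sum>\<sigma> | \<sigma> permutes {..<k}. M) / fact k"
    using permuted_close by (intro divide_right_mono sum_mono) auto
  finally show ?thesis by (simp add: card_permutations_lessThan)
qed

section \<open>The staircase vector\<close>

lemma pred_mod_div_eq:
  fixes i n :: nat
  assumes "0 < i mod n"
  shows "(i - 1) mod n = i mod n - 1" "(i - 1) div n = i div n"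
proof -
  obtain i' where i: "i = Suc i'" using assms by (cases i) auto
  have "Suc (i' mod n) \<noteq> n" using assms by (auto simp: i mod_Suc)
  then show "(i - 1) mod n = i mod n - 1" "(i - 1) div n = i div n"
    by (simp_all add: i mod_Suc div_Suc)
qed

lemma layer_index_mod_div:
  fixes j m n :: nat
  assumes "j < n"
  shows "(j + m * n) mod n = j" "(j + m * n) div n = m"
  using assms by simp_all

lemma Suc_mod_div_eq:
  fixes i n :: nat
  assumes "Suc (i mod n) < n"
  shows "Suc i mod n = Suc (i mod n)" "Suc i div n = i div n"
  using assms by (simp_all add: mod_Suc div_Suc)

lemma pow_le_div_of_mult_le:
  fixes d i :: nat
  assumes "Suc d * 4 ^ d \<le> i" "j \<le> d"
  shows "4 ^ j \<le> i div Suc d"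
proof -
  have "(4::nat) ^ j \<le> 4 ^ d" using assms(2) by (simp add: power_increasing)
  also have "\<dots> = (4 ^ d * Suc d) div Suc d" by (rule div_mult_self_is_m[symmetric]) simp
  also have "\<dots> \<le> i div Suc d" using assms(1) by (intro div_le_mono) (simp add: mult.commute)
  finally show ?thesis .
qed

lemma inj_on_layer_index:
  fixes f :: "nat \<Rightarrow> nat"
  assumes "inj_on f J" "\<And>j. j \<in> J \<Longrightarrow> f j < n"
  shows "inj_on (\<lambda>(j, m). f j + m * n) (SIGMA j:J. B j)"
proof (rule inj_onI)
  fix p p' assume "p \<in> (SIGMA j:J. B j)" "p' \<in> (SIGMA j:J. B j)"
    "(\<lambda>(j, m). f j + m * n) p = (\<lambda>(j, m). f j + m * n) p'"
  moreover obtain j m j' m' where [simp]: "p = (j, m)" "p' = (j', m')" by (cases p, cases p')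
  ultimately have "j \<in> J" "j' \<in> J" "f j + m * n = f j' + m' * n" by auto
  then have "f j = f j'" "m = m'"
    using layer_index_mod_div[of "f j" n m] layer_index_mod_div[of "f j'" n m'] assms(2) by metis+
  then show "p = p'" using \<open>j \<in> J\<close> \<open>j' \<in> J\<close> assms(1) by (simp add: inj_on_eq_iff)
qed

lemma sum_layer_index:
  fixes f :: "nat \<Rightarrow> nat"
  assumes "inj_on f J" "\<And>j. j \<in> J \<Longrightarrow> f j < n" "finite J" "\<And>j. finite (B j)"
  shows "(\<Sum>i \<in> (\<lambda>(j, m). f j + m * n) ` (SIGMA j:J. B j). g i) = (\<Sum>j\<in>J. \<Sum>m\<in>B j. g (f j + m * n))"
proof -
  have "(\<Sum>i \<in> (\<lambda>(j, m). f j + m * n) ` (SIGMA j:J. B j). g i) = (\<Sum>(j, m)\<in>(SIGMA j:J. B j). g (f j + m * n))"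
    by (auto simp: sum.reindex[OF inj_on_layer_index[OF assms(1,2)]] intro!: sum.cong)
  also have "\<dots> = (\<Sum>j\<in>J. \<Sum>m\<in>B j. g (f j + m * n))"
    using assms(3,4) by (simp add: sum.Sigma)
  finally show ?thesis .
qed

definition stair_height :: "nat \<Rightarrow> nat \<Rightarrow> real"
  where "stair_height d j = real (max (d - j) 1) / real d"

text \<open>
  Coordinate \<open>j + m (d + 1)\<close> with \<open>j \<le> d\<close> is the \<open>m\<close>-th coordinate of layer \<open>j\<close>;
  only the first \<open>4^j\<close> coordinates of layer \<open>j\<close> are nonzero.
\<close>

definition staircase :: "nat \<Rightarrow> nat \<Rightarrow> real"
  where "staircase d i =
    (if i div Suc d < 4 ^ (i mod Suc d) then stair_height d (i mod Suc d) else 0)"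

definition truncated_staircase :: "nat \<Rightarrow> nat \<Rightarrow> real"
  where "truncated_staircase d i = (if i mod Suc d = d then 0 else staircase d i)"

text \<open>
  \<open>layer_shift d q\<close> swaps coordinate \<open>m\<close> of layer \<open>j\<close> with coordinate \<open>m\<close> of layer
  \<open>j + 1\<close>, for all \<open>m < 4^j\<close> and all \<open>j < d\<close> with \<open>j mod 2 = q\<close>; fixing the parity
  makes these transpositions disjoint.
\<close>

definition in_shift_block :: "nat \<Rightarrow> nat \<Rightarrow> nat \<Rightarrow> bool"
  where "in_shift_block d q i \<longleftrightarrow>
    i mod Suc d < d \<and> i mod Suc d mod 2 = q \<and> i div Suc d < 4 ^ (i mod Suc d)"

definition layer_shift :: "nat \<Rightarrow> nat \<Rightarrow> nat \<Rightarrow> nat"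
  where "layer_shift d q i =
    (if in_shift_block d q i then Suc i
     else if 0 < i mod Suc d \<and> in_shift_block d q (i - 1) then i - 1 else i)"

lemma stair_height_pos: "1 \<le> d \<Longrightarrow> 0 < stair_height d j"
  by (simp add: stair_height_def)

lemma stair_height_le_1: "1 \<le> d \<Longrightarrow> stair_height d j \<le> 1"
  by (simp add: stair_height_def)

lemma stair_height_0: "1 \<le> d \<Longrightarrow> stair_height d 0 = 1"
  by (simp add: stair_height_def max_def)

lemma stair_height_last: "stair_height d d = 1 / real d"
  by (simp add: stair_height_def)

lemma stair_height_step: "\<bar>stair_height d j - stair_height d (Suc j)\<bar> \<le> 1 / real d"
proof -
  have "max (d - j) 1 \<le> max (d - Suc j) 1 + 1 \<and> max (d - Suc j) 1 \<le> max (d - j) (1::nat)"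
    by (simp add: max_def) arith
  then have "\<bar>real (max (d - j) 1) - real (max (d - Suc j) 1)\<bar> \<le> 1"
    by linarith
  then show ?thesis
    by (simp add: stair_height_def diff_divide_distrib[symmetric] divide_right_mono)
qed

lemma staircase_layer:
  assumes "j \<le> d"
  shows "staircase d (j + m * Suc d) = (if m < 4 ^ j then stair_height d j else 0)"
  using layer_index_mod_div[of j "Suc d" m] assms by (simp add: staircase_def)

lemma staircase_vanish:
  assumes "Suc d * 4 ^ d \<le> i"
  shows "staircase d i = 0"
proof -
  have "i mod Suc d \<le> d" using mod_less_divisor[of "Suc d" i] by simp
  then show ?thesis
    using pow_le_div_of_mult_le[OF assms \<open>i mod Suc d \<le> d\<close>] by (simp add: staircase_def)
qed

lemma staircase_in_sphere:
  assumes "1 \<le> d" "Suc d * 4 ^ d \<le> k"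
  shows "staircase d \<in> sphere_linf k"
proof (rule in_sphere_linfI)
  show "in_Rk k (staircase d)"
    using assms(2) staircase_vanish by (auto simp: in_Rk_def)
  show "\<bar>staircase d i\<bar> \<le> 1" for i
    using assms stair_height_pos stair_height_le_1 by (simp add: staircase_def less_imp_le)
  show "0 < k" using assms(2) by (metis le0 less_le_trans mult_pos_pos zero_less_Suc zero_less_numeral zero_less_power)
  show "\<bar>staircase d 0\<bar> = 1" using assms by (simp add: staircase_def stair_height_0)
qed

lemma truncated_staircase_in_sphere:
  assumes "1 \<le> d" "Suc d * 4 ^ d \<le> k"
  shows "truncated_staircase d \<in> sphere_linf k"
proof (rule in_sphere_linfI)
  have "staircase d \<in> sphere_linf k" using assms by (rule staircase_in_sphere)
  then show "in_Rk k (truncated_staircase d)"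
    by (simp add: truncated_staircase_def sphere_linf_def in_Rk_def)
  show "\<bar>truncated_staircase d i\<bar> \<le> 1" if "i < k" for i
    using \<open>staircase d \<in> sphere_linf k\<close> that abs_le_linf_norm[of i k "staircase d"]
    by (simp add: truncated_staircase_def sphere_linf_def)
  show "0 < k" using assms(2) by (metis le0 less_le_trans mult_pos_pos zero_less_Suc zero_less_numeral zero_less_power)
  show "\<bar>truncated_staircase d 0\<bar> = 1"
    using assms by (simp add: truncated_staircase_def staircase_def stair_height_0)
qed

lemma linf_norm_truncated_staircase_diff:
  assumes "1 \<le> d"
  shows "linf_norm k (truncated_staircase d - staircase d) \<le> 1 / real d"
  using assms stair_height_pos[OF assms]
  by (intro linf_norm_le)
     (auto simp: truncated_staircase_def staircase_def stair_height_last less_imp_le)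

lemma layer_shift_cases:
  obtains (up) "in_shift_block d q i" "layer_shift d q i = Suc i"
  | (down) "0 < i mod Suc d" "in_shift_block d q (i - 1)" "layer_shift d q i = i - 1"
  | (fixed) "layer_shift d q i = i"
proof (cases "in_shift_block d q i")
  case True
  then show ?thesis using up by (simp add: layer_shift_def)
next
  case False
  then show ?thesis
    using down fixed by (cases "0 < i mod Suc d \<and> in_shift_block d q (i - 1)") (auto simp: layer_shift_def)
qed

lemma layer_shift_involution: "layer_shift d q (layer_shift d q i) = i"
proof (cases d q i rule: layer_shift_cases)
  case up
  have parity: "Suc j mod 2 \<noteq> j mod 2" for j :: nat by presburger
  from up have "Suc (i mod Suc d) < Suc d" by (simp add: in_shift_block_def)
  note Suc_i = Suc_mod_div_eq[OF this]
  then have "\<not> in_shift_block d q (Suc i)"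
    using up parity[of "i mod Suc d"] by (simp add: in_shift_block_def)
  then show ?thesis using up Suc_i by (simp add: layer_shift_def)
next
  case down
  then show ?thesis by (cases i) (simp_all add: layer_shift_def)
qed simp

lemma layer_shift_permutes:
  assumes "Suc d * 4 ^ d \<le> k"
  shows "layer_shift d q permutes {..<k}"
proof (rule involution_permutes[OF layer_shift_involution])
  fix i assume "i \<notin> {..<k}"
  then have big: "4 ^ j \<le> i div Suc d" if "j \<le> d" for j
    using assms pow_le_div_of_mult_le[of d i j] that by simp
  have "\<not> in_shift_block d q i"
    using big[of "i mod Suc d"] by (auto simp: in_shift_block_def)
  moreover have "\<not> in_shift_block d q (i - 1)" if "0 < i mod Suc d"
    using big[of "i mod Suc d - 1"] pred_mod_div_eq[OF that] by (auto simp: in_shift_block_def)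
  ultimately show "layer_shift d q i = i" by (auto simp: layer_shift_def)
qed

lemma layer_shift_block:
  assumes "j < d" "j mod 2 = q" "m < 4 ^ j"
  shows "layer_shift d q (Suc j + m * Suc d) = j + m * Suc d"
proof -
  have parity: "Suc j mod 2 \<noteq> j mod 2" by presburger
  have "\<not> in_shift_block d q (Suc j + m * Suc d)"
    using assms parity layer_index_mod_div[of "Suc j" "Suc d" m] by (auto simp: in_shift_block_def)
  moreover have "in_shift_block d q (j + m * Suc d)"
    using assms layer_index_mod_div[of j "Suc d" m] by (simp add: in_shift_block_def)
  ultimately show ?thesis
    using layer_index_mod_div[of "Suc j" "Suc d" m] assms by (simp add: layer_shift_def)
qed

lemma linf_norm_staircase_shift_diff:
  assumes "1 \<le> d"
  shows "linf_norm k (staircase d - (staircase d \<circ> layer_shift d q)) \<le> 1 / real d"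
proof (rule linf_norm_le)
  fix i
  let ?j = "i mod Suc d" and ?m = "i div Suc d"
  have pow_mono: "(4::nat) ^ (?j - 1) \<le> 4 ^ ?j" by (simp add: power_increasing)
  show "\<bar>(staircase d - (staircase d \<circ> layer_shift d q)) i\<bar> \<le> 1 / real d"
  proof (cases d q i rule: layer_shift_cases)
    case up
    then have "Suc ?j < Suc d" by (simp add: in_shift_block_def)
    then show ?thesis
      using up stair_height_step[of d ?j]
      by (simp add: in_shift_block_def staircase_def Suc_mod_div_eq)
  next
    case down
    then have "?m < 4 ^ (?j - 1)" using pred_mod_div_eq[OF down(1)] by (simp add: in_shift_block_def)
    with pow_mono have "?m < 4 ^ ?j" by linarith
    then show ?thesis
      using down stair_height_step[of d "?j - 1"] pred_mod_div_eq[OF down(1)]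
      by (simp add: in_shift_block_def staircase_def abs_minus_commute)
  qed simp
qed simp

lemma half_le_of_layer_masses:
  fixes a :: "nat \<Rightarrow> real"
  assumes "0 \<le> a 0" "(\<Sum>j\<le>d. a j) = 1" "(\<Sum>j<d. a j - a (Suc j) / 4) \<le> M" "a d \<le> M / 2"
  shows "1 / 2 \<le> M"
proof -
  have "(\<Sum>j<d. a j) = 1 - a d"
    using assms(2) by (simp add: lessThan_Suc_atMost[symmetric])
  moreover have "(\<Sum>j<d. a (Suc j)) \<le> 1"
    using assms(1,2) sum.lessThan_Suc_shift[of a d] by (simp add: lessThan_Suc_atMost)
  ultimately have "1 - a d - 1 / 4 \<le> M"
    using assms(3) by (simp add: sum_subtractf sum_divide_distrib[symmetric])
  then show ?thesis using assms(4) by simp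
qed

section \<open>Equivariant weight fields\<close>

locale equivariant_weights =
  fixes k :: nat and t M :: real and \<nu> :: "(nat \<Rightarrow> real) \<Rightarrow> nat \<Rightarrow> real"
  assumes nonneg: "x \<in> sphere_linf k \<Longrightarrow> 0 \<le> \<nu> x i"
    and sum_eq_1: "x \<in> sphere_linf k \<Longrightarrow> (\<Sum>i<k. \<nu> x i) = 1"
    and vanish: "x \<in> sphere_linf k \<Longrightarrow> x i = 0 \<Longrightarrow> \<nu> x i = 0"
    and sum_abs_diff_le: "x \<in> sphere_linf k \<Longrightarrow> y \<in> sphere_linf k \<Longrightarrow> linf_norm k (x - y) \<le> t
      \<Longrightarrow> (\<Sum>i<k. \<bar>\<nu> x i - \<nu> y i\<bar>) \<le> M"
    and permute: "x \<in> sphere_linf k \<Longrightarrow> \<sigma> permutes {..<k} \<Longrightarrow> \<nu> (x \<circ> \<sigma>) i = \<nu> x (\<sigma> i)"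
begin

lemma mass_transfer_le:
  assumes "x \<in> sphere_linf k" "y \<in> sphere_linf k" "linf_norm k (x - y) \<le> t" "A \<subseteq> {..<k}"
  shows "(\<Sum>i\<in>A. \<nu> y i - \<nu> x i) \<le> M / 2"
  using sum_diff_le_half_sum_abs_diff[of "{..<k}" "\<nu> x" "\<nu> y" A] assms sum_eq_1 sum_abs_diff_le
  by fastforce

lemma eq_on_level_set:
  assumes x: "x \<in> sphere_linf k" and "i < k" "i' < k" "x i = x i'"
  shows "\<nu> x i = \<nu> x i'"
proof -
  let ?\<tau> = "Transposition.transpose i i'"
  have \<tau>: "?\<tau> permutes {..<k}" using assms by (intro permutes_swap_id) auto
  have "x \<circ> ?\<tau> = x" using assms(4) by (auto simp: fun_eq_iff Transposition.transpose_def)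
  then show ?thesis using permute[OF x \<tau>, of i] by simp
qed

end

locale staircase_test = equivariant_weights +
  fixes d :: nat
  assumes d_pos: "1 \<le> d" and dim: "Suc d * 4 ^ d \<le> k" and step_le: "1 / real d \<le> t"
begin

definition layer_weight :: "nat \<Rightarrow> real"
  where "layer_weight j = \<nu> (staircase d) j"

lemma linf_norm_le_t_of_le_step: "linf_norm k (x - y) \<le> 1 / real d \<Longrightarrow> linf_norm k (x - y) \<le> t"
  using step_le by linarith

lemma layer_index_lt:
  assumes "j \<le> d" "m < 4 ^ j"
  shows "j + m * Suc d < k"
proof -
  have "m < 4 ^ d" using assms power_increasing[of j d "4::nat"] by linarith
  then have "Suc m * Suc d \<le> 4 ^ d * Suc d" by (intro mult_right_mono) auto
  then show ?thesis using assms dim by (simp add: mult.commute)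
qed

lemma weight_on_layer:
  assumes "j \<le> d" "m < 4 ^ j"
  shows "\<nu> (staircase d) (j + m * Suc d) = layer_weight j"
proof -
  have "j + m * Suc d < k" "j < k" using assms layer_index_lt[of j m] layer_index_lt[of j 0] by auto
  moreover have "staircase d (j + m * Suc d) = staircase d j"
    using assms staircase_layer[of j d m] staircase_layer[of j d 0] by simp
  ultimately show ?thesis
    unfolding layer_weight_def by (rule eq_on_level_set[OF staircase_in_sphere[OF d_pos dim]])
qed

lemma total_layer_mass: "(\<Sum>j\<le>d. 4 ^ j * layer_weight j) = 1"
proof -
  let ?C = "(\<lambda>(j, m). j + m * Suc d) ` (SIGMA j:{..d}. {..<4 ^ j})"
  have x: "staircase d \<in> sphere_linf k" using d_pos dim by (rule staircase_in_sphere)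
  have C: "?C \<subseteq> {..<k}" using layer_index_lt by auto
  have off: "staircase d i = 0" if "i \<notin> ?C" for i
  proof (rule ccontr)
    assume "staircase d i \<noteq> 0"
    then have "(i mod Suc d, i div Suc d) \<in> (SIGMA j:{..d}. {..<4 ^ j})"
      by (auto simp: staircase_def less_Suc_eq_le split: if_splits)
    moreover have "i = (\<lambda>(j, m). j + m * Suc d) (i mod Suc d, i div Suc d)"
      by (simp only: case_prod_conv mod_div_mult_eq)
    ultimately show False using that by blast
  qed
  have "1 = (\<Sum>i<k. \<nu> (staircase d) i)" using sum_eq_1[OF x] by simp
  also have "\<dots> = (\<Sum>i\<in>?C. \<nu> (staircase d) i)"
    by (rule sum.mono_neutral_right[OF finite_lessThan C]) (use off vanish[OF x] in blast)
  also have "\<dots> = (\<Sum>j\<le>d. \<Sum>m<4 ^ j. \<nu> (staircase d) (j + m * Suc d))"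
    by (rule sum_layer_index[of "\<lambda>j. j"]) auto
  also have "\<dots> = (\<Sum>j\<le>d. \<Sum>m<(4::nat) ^ j. layer_weight j)"
    by (intro sum.cong refl) (use weight_on_layer in auto)
  also have "\<dots> = (\<Sum>j\<le>d. 4 ^ j * layer_weight j)"
    by simp
  finally show ?thesis by simp
qed

lemma layer_shift_mass:
  "(\<Sum>j | j < d \<and> j mod 2 = q. 4 ^ j * (layer_weight j - layer_weight (Suc j))) \<le> M / 2"
proof -
  let ?J = "{j. j < d \<and> j mod 2 = q}"
  let ?S = "(\<lambda>(j, m). Suc j + m * Suc d) ` (SIGMA j:?J. {..<4 ^ j})"
  let ?x = "staircase d" and ?\<sigma> = "layer_shift d q"
  have x: "?x \<in> sphere_linf k" using d_pos dim by (rule staircase_in_sphere)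
  have \<sigma>: "?\<sigma> permutes {..<k}" using dim by (rule layer_shift_permutes)
  have S: "?S \<subseteq> {..<k}" using layer_index_lt[of "Suc _"] by (force intro: power_increasing)
  have close: "linf_norm k (?x - (?x \<circ> ?\<sigma>)) \<le> t"
    by (rule linf_norm_le_t_of_le_step[OF linf_norm_staircase_shift_diff[OF d_pos]])
  have transfer: "(\<Sum>i\<in>?S. \<nu> (?x \<circ> ?\<sigma>) i - \<nu> ?x i) \<le> M / 2"
    by (rule mass_transfer_le[OF x sphere_linf_permute[OF \<sigma> x] close S])
  have shifted: "\<nu> (?x \<circ> ?\<sigma>) (Suc j + m * Suc d) - \<nu> ?x (Suc j + m * Suc d)
      = layer_weight j - layer_weight (Suc j)" if "j \<in> ?J" "m < 4 ^ j" for j m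
    using that permute[OF x \<sigma>] layer_shift_block[of j d q m] weight_on_layer[of j m]
      weight_on_layer[of "Suc j" m] by simp
  have "(\<Sum>i\<in>?S. \<nu> (?x \<circ> ?\<sigma>) i - \<nu> ?x i)
      = (\<Sum>j\<in>?J. 4 ^ j * (layer_weight j - layer_weight (Suc j)))"
    using shifted by (subst sum_layer_index) auto
  with transfer show ?thesis by simp
qed

lemma bottom_layer_mass: "4 ^ d * layer_weight d \<le> M / 2"
proof -
  let ?R = "(\<lambda>(j, m). j + m * Suc d) ` (SIGMA j:{d}. {..<4 ^ d})"
  let ?x = "staircase d" and ?z = "truncated_staircase d"
  have x: "?x \<in> sphere_linf k" and z: "?z \<in> sphere_linf k"
    using d_pos dim by (rule staircase_in_sphere, rule truncated_staircase_in_sphere)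
  have R: "?R \<subseteq> {..<k}" using layer_index_lt by auto
  have close: "linf_norm k (?z - ?x) \<le> t"
    by (rule linf_norm_le_t_of_le_step[OF linf_norm_truncated_staircase_diff[OF d_pos]])
  have transfer: "(\<Sum>i\<in>?R. \<nu> ?x i - \<nu> ?z i) \<le> M / 2"
    by (rule mass_transfer_le[OF z x close R])
  have dropped: "\<nu> ?x (d + m * Suc d) - \<nu> ?z (d + m * Suc d) = layer_weight d" if "m < 4 ^ d" for m
    using that weight_on_layer[of d m] vanish[OF z] layer_index_mod_div[of d "Suc d" m]
    by (simp add: truncated_staircase_def)
  have "(\<Sum>i\<in>?R. \<nu> ?x i - \<nu> ?z i) = 4 ^ d * layer_weight d"
    using dropped by (subst sum_layer_index) auto
  with transfer show ?thesis by simp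
qed

lemma half_le_M: "1 / 2 \<le> M"
proof (rule half_le_of_layer_masses)
  let ?a = "\<lambda>j. 4 ^ j * layer_weight j"
  show "0 \<le> ?a 0"
    using nonneg staircase_in_sphere[OF d_pos dim] by (simp add: layer_weight_def)
  show "(\<Sum>j\<le>d. ?a j) = 1" by (rule total_layer_mass)
  show "?a d \<le> M / 2" by (rule bottom_layer_mass)
  have parts: "{..<d} = {j. j < d \<and> j mod 2 = 0} \<union> {j. j < d \<and> j mod 2 = 1}" by auto
  have "(\<Sum>j<d. ?a j - ?a (Suc j) / 4) = (\<Sum>j<d. 4 ^ j * (layer_weight j - layer_weight (Suc j)))"
    by (simp add: algebra_simps)
  also have "\<dots> = (\<Sum>j | j < d \<and> j mod 2 = 0. 4 ^ j * (layer_weight j - layer_weight (Suc j)))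
      + (\<Sum>j | j < d \<and> j mod 2 = 1. 4 ^ j * (layer_weight j - layer_weight (Suc j)))"
    unfolding parts by (rule sum.union_disjoint) auto
  also have "\<dots> \<le> M" using layer_shift_mass[of 0] layer_shift_mass[of 1] by simp
  finally show "(\<Sum>j<d. ?a j - ?a (Suc j) / 4) \<le> M" .
qed

end

lemma support_preserving_modulus_ge_half:
  assumes "1 \<le> d" "Suc d * 4 ^ d \<le> k" "1 / real d \<le> t" and F: "support_preserving_map k F"
  shows "1 / 2 \<le> modulus k F t"
proof -
  interpret staircase_test k t "modulus k F t" "sym_average k F" d
  proof unfold_locales
    show "(\<Sum>i<k. \<bar>sym_average k F x i - sym_average k F y i\<bar>) \<le> modulus k F t"
      if "x \<in> sphere_linf k" "y \<in> sphere_linf k" "linf_norm k (x - y) \<le> t" for x y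
      by (rule sum_abs_sym_average_diff_le[OF l1_norm_le_modulus[OF F] that])
  qed (use assms in \<open>simp_all add: sym_average_nonneg sum_sym_average sym_average_vanish sym_average_permute\<close>)
  show ?thesis by (rule half_le_M)
qed

lemma dimension_bound: "1 \<le> d \<Longrightarrow> Suc d * 4 ^ d \<le> (19::nat) ^ (2 * d - 1) + 1"
proof -
  assume "1 \<le> d"
  have "Suc d \<le> 2 ^ d" using less_exp[of d] by (simp add: Suc_le_eq)
  then have "Suc d * 4 ^ d \<le> 2 ^ d * 4 ^ d" by (rule mult_right_mono) simp
  also have "\<dots> = (8::nat) ^ d" by (simp add: power_mult_distrib[symmetric])
  also have "\<dots> \<le> 19 ^ d" by (rule power_mono) auto
  also have "\<dots> \<le> 19 ^ (2 * d - 1)" using \<open>1 \<le> d\<close> by (intro power_increasing) auto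
  finally show ?thesis by simp
qed

lemma exists_dimension_modulus_ge_half:
  assumes "0 < \<delta>"
  obtains k :: nat where "1 \<le> k" "\<And>F. support_preserving_map k F \<Longrightarrow> 1 / 2 \<le> modulus k F \<delta>"
proof
  define d where "d = nat \<lceil>1 / \<delta>\<rceil>"
  have d: "1 \<le> d" using assms by (simp add: d_def Suc_le_eq)
  have "1 / \<delta> \<le> real d" unfolding d_def by linarith
  then have step: "1 / real d \<le> \<delta>" using assms d by (simp add: field_simps)
  show "1 / 2 \<le> modulus (Suc d * 4 ^ d) F \<delta>" if "support_preserving_map (Suc d * 4 ^ d) F" for F
    by (rule support_preserving_modulus_ge_half[OF d order.refl step that])
  show "1 \<le> Suc d * 4 ^ d" by (simp add: Suc_le_eq)
qed

theorem theorem4p4: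
  fixes d :: nat
  assumes "d \<ge> 1"
  shows "(\<forall>k::nat. \<forall>F. k \<ge> 19 ^ (2 * d - 1) + 1 \<longrightarrow> support_preserving_map k F
            \<longrightarrow> modulus k F (1 / real d) \<ge> 1 / 2)
         \<and> \<not> (\<exists>F :: nat \<Rightarrow> (nat \<Rightarrow> real) \<Rightarrow> (nat \<Rightarrow> real).
               (\<forall>k\<ge>1. support_preserving_map k (F k)) \<and>
               (\<forall>\<epsilon>>0. \<exists>\<delta>>0. \<forall>k\<ge>1. modulus k (F k) \<delta> < \<epsilon>))"
proof (intro conjI allI impI notI)
  fix k :: nat and F
  assume "k \<ge> 19 ^ (2 * d - 1) + 1" and F: "support_preserving_map k F"
  then have "Suc d * 4 ^ d \<le> k" using dimension_bound[OF assms] by linarith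
  then show "modulus k F (1 / real d) \<ge> 1 / 2"
    by (rule support_preserving_modulus_ge_half[OF assms _ order.refl F])
next
  assume "\<exists>F :: nat \<Rightarrow> (nat \<Rightarrow> real) \<Rightarrow> (nat \<Rightarrow> real).
            (\<forall>k\<ge>1. support_preserving_map k (F k)) \<and> (\<forall>\<epsilon>>0. \<exists>\<delta>>0. \<forall>k\<ge>1. modulus k (F k) \<delta> < \<epsilon>)"
  then obtain F :: "nat \<Rightarrow> (nat \<Rightarrow> real) \<Rightarrow> (nat \<Rightarrow> real)" and \<delta> :: real
    where F: "\<forall>k\<ge>1. support_preserving_map k (F k)"
      and \<delta>: "0 < \<delta>" "\<forall>k\<ge>1. modulus k (F k) \<delta> < 1 / 2"
    by (metis half_gt_zero_iff zero_less_one)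
  obtain k :: nat where "1 \<le> k" "\<And>G. support_preserving_map k G \<Longrightarrow> 1 / 2 \<le> modulus k G \<delta>"
    using exists_dimension_modulus_ge_half[OF \<delta>(1)] by blast
  then show False using F \<delta>(2) by force
qed

end
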